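(* Let $(A,W)$ be a $T_1$ Pratt comonoid such that $W$ is closed under complementation (i.e., $x\in W$ implies $A-x\in W$). Then $(A,W)$ is discrete, i.e., $W$ is the set of all subsets of $A$.
   Context: A Pratt comonoid is a pair $(A,W)$ where $A$ is a set and $W$ is a set of subsets of $A$ such that (i) $\emptyset\in W$ and $A\in W$; (ii) whenever $C\subseteq A\times A$ is such that for every $a\in A$ both the $a$-th row $\{b\mid (a,b)\in C\}$ and the $a$-th column $\{b\mid (b,a)\in C\}$ belong to $W$ (such a $C$ is called a crossword over $W$), the diagonal $\{b\mid (b,b)\in C\}$ also belongs to $W$. $(A,W)$ is called $T_1$ if for all distinct $a,b\in A$ there is an element of $W$ containing $a$ but not $b$. It is called discrete if $W$ is the full power set of $A$. *)

theory Defs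
  imports Main
begin

definition crossword :: "'a set \<Rightarrow> 'a set set \<Rightarrow> ('a \<times> 'a) set \<Rightarrow> bool" where
  "crossword A W C \<longleftrightarrow> C \<subseteq> A \<times> A \<and>
     (\<forall>a\<in>A. {b. (a, b) \<in> C} \<in> W \<and> {b. (b, a) \<in> C} \<in> W)"

definition pratt_comonoid :: "'a set \<Rightarrow> 'a set set \<Rightarrow> bool" where
  "pratt_comonoid A W \<longleftrightarrow> W \<subseteq> Pow A \<and> {} \<in> W \<and> A \<in> W \<and>
     (\<forall>C. crossword A W C \<longrightarrow> {b. (b, b) \<in> C} \<in> W)"

definition T1_comonoid :: "'a set \<Rightarrow> 'a set set \<Rightarrow> bool" where
  "T1_comonoid A W \<longleftrightarrow> (\<forall>a\<in>A. \<forall>b\<in>A. a \<noteq> b \<longrightarrow> (\<exists>x\<in>W. a \<in> x \<and> b \<notin> x))"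

definition discrete_comonoid :: "'a set \<Rightarrow> 'a set set \<Rightarrow> bool" where
  "discrete_comonoid A W \<longleftrightarrow> W = Pow A"

end

theory Submission
  imports Defs
begin

text \<open>The crossword \<open>\<Union>U\<in>D. U \<times> U\<close> shows that a Pratt comonoid is closed under
  disjoint unions, and the crossword \<open>U \<times> V\<close> that it is closed under binary intersections.
  Given complements and \<open>T\<^sub>1\<close>, a maximal disjoint family of open sets avoiding a point \<open>a\<close>
  must cover \<open>A - {a}\<close>: a point \<open>y\<close> left uncovered lies in an open set avoiding \<open>a\<close>, whose
  intersection with the (open) complement of the union could be added to the family. Hence
  every singleton is open, and every subset is a disjoint union of singletons.\<close>

lemma pratt_comonoid_Union_disjoint:
  assumes P: "pratt_comonoid A W" and DW: "D \<subseteq> W" and disj: "pairwise disjnt D"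
  shows "\<Union>D \<in> W"
proof -
  have WP: "W \<subseteq> Pow A" and empty: "{} \<in> W"
    and diag: "\<And>C. crossword A W C \<Longrightarrow> {b. (b, b) \<in> C} \<in> W"
    using P unfolding pratt_comonoid_def by auto
  define C where "C = (\<Union>U\<in>D. U \<times> U)"
  have slice: "{b. (x, b) \<in> C} \<in> W \<and> {b. (b, x) \<in> C} \<in> W" for x
  proof (cases "\<exists>U\<in>D. x \<in> U")
    case True
    then obtain U where U: "U \<in> D" "x \<in> U" by blast
    with disj have "{b. (x, b) \<in> C} = U" "{b. (b, x) \<in> C} = U"
      unfolding C_def pairwise_def disjnt_def by blast+
    with U DW show ?thesis by auto
  next
    case False
    then have "{b. (x, b) \<in> C} = {}" "{b. (b, x) \<in> C} = {}" unfolding C_def by blast+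
    with empty show ?thesis by simp
  qed
  have "C \<subseteq> A \<times> A" using DW WP unfolding C_def by blast
  with slice have "crossword A W C" unfolding crossword_def by blast
  moreover have "{b. (b, b) \<in> C} = \<Union>D" unfolding C_def by blast
  ultimately show ?thesis using diag by metis
qed

lemma pratt_comonoid_Int:
  assumes P: "pratt_comonoid A W" and U: "U \<in> W" and V: "V \<in> W"
  shows "U \<inter> V \<in> W"
proof -
  have WP: "W \<subseteq> Pow A" and empty: "{} \<in> W"
    and diag: "\<And>C. crossword A W C \<Longrightarrow> {b. (b, b) \<in> C} \<in> W"
    using P unfolding pratt_comonoid_def by auto
  have "{b. (a, b) \<in> U \<times> V} \<in> W" "{b. (b, a) \<in> U \<times> V} \<in> W" for a
    by (cases "a \<in> U"; cases "a \<in> V"; use U V empty in auto)+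
  moreover have "U \<times> V \<subseteq> A \<times> A" using U V WP by blast
  ultimately have "crossword A W (U \<times> V)" unfolding crossword_def by blast
  moreover have "{b. (b, b) \<in> U \<times> V} = U \<inter> V" by blast
  ultimately show ?thesis using diag by metis
qed

lemma exists_maximal_disjoint_subfamily:
  "\<exists>M \<subseteq> F. pairwise disjnt M \<and> (\<forall>U\<in>F. U \<inter> \<Union>M = {} \<longrightarrow> U \<in> M)"
proof -
  define \<F> where "\<F> = {M. M \<subseteq> F \<and> pairwise disjnt M}"
  have "\<Union>\<C> \<in> \<F>" if "\<C> \<in> chains \<F>" for \<C>
    using that pairwise_chain_Union[of \<C> disjnt]
    unfolding \<F>_def chains_def chain_subset_def by blast
  then obtain M where M: "M \<in> \<F>" and max: "\<And>N. N \<in> \<F> \<Longrightarrow> M \<subseteq> N \<Longrightarrow> N = M"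
    using Zorn_Lemma[of \<F>] by blast
  have "U \<in> M" if "U \<in> F" "U \<inter> \<Union>M = {}" for U
  proof -
    have "insert U M \<in> \<F>"
      using M that unfolding \<F>_def by (auto simp: pairwise_insert disjnt_def)
    with max show ?thesis by blast
  qed
  with M show ?thesis unfolding \<F>_def by blast
qed

lemma pratt_comonoid_Diff_singleton:
  assumes P: "pratt_comonoid A W" and T1: "T1_comonoid A W"
    and compl: "\<forall>x\<in>W. A - x \<in> W" and a: "a \<in> A"
  shows "A - {a} \<in> W"
proof -
  have WP: "W \<subseteq> Pow A" using P unfolding pratt_comonoid_def by auto
  obtain M where MF: "M \<subseteq> {U \<in> W. a \<notin> U}" and disj: "pairwise disjnt M"
    and max: "\<forall>U \<in> {U \<in> W. a \<notin> U}. U \<inter> \<Union>M = {} \<longrightarrow> U \<in> M"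
    using exists_maximal_disjoint_subfamily[of "{U \<in> W. a \<notin> U}"] by (elim exE conjE)
  have UM: "\<Union>M \<in> W" using pratt_comonoid_Union_disjoint[OF P _ disj] MF by blast
  have "y \<in> \<Union>M" if y: "y \<in> A - {a}" for y
  proof (rule ccontr)
    assume y_out: "y \<notin> \<Union>M"
    obtain x where x: "x \<in> W" "y \<in> x" "a \<notin> x"
      using T1 y a unfolding T1_comonoid_def by blast
    have "x \<inter> (A - \<Union>M) \<in> W"
      using pratt_comonoid_Int[OF P x(1)] compl UM by blast
    then have "x \<inter> (A - \<Union>M) \<in> M"
      by (intro max[rule_format]) (use x(3) in auto)
    with x(2) y y_out show False by blast
  qed
  moreover have "\<Union>M \<subseteq> A - {a}" using MF WP by blast
  ultimately have "\<Union>M = A - {a}" by blast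
  with UM show ?thesis by simp
qed

theorem theorem4p4:
  fixes A :: "'a set" and W :: "'a set set"
  assumes "pratt_comonoid A W"
    and "T1_comonoid A W"
    and "\<forall>x\<in>W. A - x \<in> W"
  shows "discrete_comonoid A W"
proof -
  have WP: "W \<subseteq> Pow A" using assms(1) unfolding pratt_comonoid_def by auto
  have singleton: "{a} \<in> W" if "a \<in> A" for a
  proof -
    have "A - (A - {a}) \<in> W"
      using assms(3) pratt_comonoid_Diff_singleton[OF assms that] by blast
    moreover have "A - (A - {a}) = {a}" using that by blast
    ultimately show ?thesis by simp
  qed
  have "S \<in> W" if "S \<subseteq> A" for S
  proof -
    have "\<Union>((\<lambda>s. {s}) ` S) \<in> W"
      using that singleton
      by (intro pratt_comonoid_Union_disjoint[OF assms(1)]) (auto simp: pairwise_def disjnt_def)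
    then show ?thesis by simp
  qed
  with WP show ?thesis unfolding discrete_comonoid_def by blast
qed

end
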